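(* For every $\lambda\in\mathcal{R}$ and every convex overmarked box $\Theta$, the pair $(\pi(A_\Theta),\pi(B^\lambda_\Theta))$ (i.e. the representation $\rho^\lambda_\Theta$) is a smooth point of the real algebraic variety $\mathrm{Hom}(\Gamma_o,\mathrm{SL}(3,\mathbb{R}))=\{(A,B)\in\mathrm{SL}(3,\mathbb{R})^2: A^3=B^3=\mathrm{Id}\}$.
   Context: $\Gamma_o=\langle a,b\mid a^3=b^3=1\rangle$ (the index-2 subgroup of $\mathrm{PSL}(2,\mathbb{Z})$ generated by $R$ and $IRI$), and $\mathrm{PGL}(3,\mathbb{R})$ is identified with $\mathrm{SL}(3,\mathbb{R})$ via $\pi:\mathrm{GL}(3,\mathbb{R})\to\mathrm{SL}(3,\mathbb{R})$, $M\mapsto(\det M)^{-1/3}M$; a representation is identified with the pair of images of the generators, so $\mathrm{Hom}(\Gamma_o,\mathrm{SL}(3,\mathbb{R}))$ is the stated subvariety of $\mathrm{M}(3,\mathbb{R})^2$. A convex overmarked box $\Theta$ is determined, in a suitable basis, by parameters $(\zeta_t,\zeta_b)\in\,]-1,1[^2$ (namely, it consists of points $p=[-1:1:0]$, $q=[1:1:0]$, $r=[1:0:1]$, $s=[-1:0:1]$, $t=[\zeta_t:1:0]$, $b=[\zeta_b:0:1]$ and lines $P=ts$, $Q=tr$, $R=bq$, $S=bp$, $T=pq$, $B=rs$). Matrices: $A_\Theta=\begin{pmatrix}\zeta_t\zeta_b-1&\zeta_t(1-\zeta_t\zeta_b)&\zeta_b-\zeta_t\\ \zeta_b-\zeta_t&1-\zeta_t\zeta_b&\zeta_t\zeta_b-1\\0&1-\zeta_t^2&0\end{pmatrix}$,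 $D_\Theta=\begin{pmatrix}1&-\zeta_t&-\zeta_b\\-\zeta_t&1&\zeta_t\zeta_b\\-\zeta_b&\zeta_t\zeta_b&1\end{pmatrix}$, $\Sigma_{(\varepsilon,\delta)}=\begin{pmatrix}1&0&0\\0&e^{-\delta}\cosh\varepsilon&-\sinh\varepsilon\\0&-\sinh\varepsilon&e^{\delta}\cosh\varepsilon\end{pmatrix}$, and $B^\lambda_\Theta=\Sigma_\lambda^{-1}D_\Theta^{-1}\,{}^tA_\Theta^{-1}D_\Theta\Sigma_\lambda$. The representation $\rho^\lambda_\Theta$ corresponds to $(\pi(A_\Theta),\pi(B^\lambda_\Theta))$. $f(\varepsilon,\delta)=e^{-\delta}\cosh\varepsilon-\sinh\varepsilon-1$ and $\mathcal{R}=\{(\varepsilon,\delta):f(\varepsilon,\delta)\ge0,\ f(\varepsilon,-\delta)\ge0\}$. *)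

theory Defs
  imports "HOL-Analysis.Analysis"
begin

type_synonym mat3 = "real^3^3"

text \<open>Real polynomial functions in the coordinates (w.r.t. the standard basis).
  For the ambient space M(3,R)^2 = mat3 \<times> mat3 the coordinates are exactly the
  18 matrix entries.\<close>

inductive_set polyfun :: "('a::euclidean_space \<Rightarrow> real) set" where
  const: "(\<lambda>x. c) \<in> polyfun"
| coord: "b \<in> Basis \<Longrightarrow> (\<lambda>x. inner x b) \<in> polyfun"
| add: "p \<in> polyfun \<Longrightarrow> q \<in> polyfun \<Longrightarrow> (\<lambda>x. p x + q x) \<in> polyfun"
| mult: "p \<in> polyfun \<Longrightarrow> q \<in> polyfun \<Longrightarrow> (\<lambda>x. p x * q x) \<in> polyfun"

text \<open>Nonsingular (smooth) point of a real algebraic set V, following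
  Bochnak--Coste--Roy, Def. 3.3.9: there are polynomials P_0,...,P_{k-1} in the
  ideal I(V) of polynomials vanishing on V whose differentials at x are linearly
  independent (Jacobian of rank k), and a Zariski open neighbourhood
  {Q \<noteq> 0} of x on which V coincides with the common zero set of the P_i.
  (Then x is nonsingular in dimension n - k.)\<close>

definition smooth_point :: "'a::euclidean_space set \<Rightarrow> 'a \<Rightarrow> bool" where
  "smooth_point V x \<longleftrightarrow> x \<in> V \<and>
     (\<exists>(k::nat) P D Q.
        (\<forall>i<k. P i \<in> polyfun \<and> (\<forall>y\<in>V. P i y = 0) \<and> (P i has_derivative D i) (at x)) \<and>
        (\<forall>c::nat \<Rightarrow> real. (\<forall>v. (\<Sum>i<k. c i * D i v) = 0) \<longrightarrow> (\<forall>i<k. c i = 0)) \<and>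
        Q \<in> polyfun \<and> Q x \<noteq> 0 \<and>
        (\<forall>y. Q y \<noteq> 0 \<longrightarrow> (y \<in> V \<longleftrightarrow> (\<forall>i<k. P i y = 0))))"

definition HomGamma :: "(mat3 \<times> mat3) set" where
  "HomGamma = {(A, B). det A = 1 \<and> det B = 1 \<and> A ** A ** A = mat 1 \<and> B ** B ** B = mat 1}"

definition piSL :: "mat3 \<Rightarrow> mat3" where
  "piSL M = (1 / root 3 (det M)) *\<^sub>R M"

definition mk3 :: "real \<Rightarrow> real \<Rightarrow> real \<Rightarrow> real \<Rightarrow> real \<Rightarrow> real \<Rightarrow> real \<Rightarrow> real \<Rightarrow> real \<Rightarrow> mat3" where
  "mk3 a11 a12 a13 a21 a22 a23 a31 a32 a33 =
     vector [vector [a11, a12, a13], vector [a21, a22, a23], vector [a31, a32, a33]]"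

definition A_Theta :: "real \<Rightarrow> real \<Rightarrow> mat3" where
  "A_Theta zt zb = mk3
     (zt*zb - 1) (zt*(1 - zt*zb)) (zb - zt)
     (zb - zt) (1 - zt*zb) (zt*zb - 1)
     0 (1 - zt^2) 0"

definition D_Theta :: "real \<Rightarrow> real \<Rightarrow> mat3" where
  "D_Theta zt zb = mk3
     1 (-zt) (-zb)
     (-zt) 1 (zt*zb)
     (-zb) (zt*zb) 1"

definition Sigma :: "real \<Rightarrow> real \<Rightarrow> mat3" where
  "Sigma eps del = mk3
     1 0 0
     0 (exp (-del) * cosh eps) (- sinh eps)
     0 (- sinh eps) (exp del * cosh eps)"

definition B_Theta :: "real \<Rightarrow> real \<Rightarrow> real \<Rightarrow> real \<Rightarrow> mat3" where
  "B_Theta eps del zt zb =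
     matrix_inv (Sigma eps del) ** matrix_inv (D_Theta zt zb) **
     matrix_inv (transpose (A_Theta zt zb)) ** D_Theta zt zb ** Sigma eps del"

definition f_R :: "real \<Rightarrow> real \<Rightarrow> real" where
  "f_R eps del = exp (-del) * cosh eps - sinh eps - 1"

definition regionR :: "(real \<times> real) set" where
  "regionR = {(eps, del). f_R eps del \<ge> 0 \<and> f_R eps (-del) \<ge> 0}"

end

theory Submission
  imports Defs
begin

text \<open>Both matrices have characteristic polynomial \<open>X\<^sup>3 - det\<close>: for \<open>A\<^sub>\<Theta>\<close> by direct
  computation, and \<open>B\<^sup>\<lambda>\<^sub>\<Theta>\<close> is conjugate to the inverse transpose of \<open>A\<^sub>\<Theta>\<close>. After the
  normalisation \<open>\<pi>\<close> both are therefore points of order three in \<open>SL(3,\<real>)\<close> with trace \<open>0\<close>.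
  By Cayley--Hamilton, away from \<open>{trace = 3}\<close> the variety \<open>{A. det A = 1, A\<^sup>3 = 1}\<close> is cut out
  by \<open>trace A = 0\<close>, \<open>\<sigma>\<^sub>2 A = 0\<close>, \<open>det A = 1\<close>, whose differentials at such a point \<open>A\<close>
  are \<open>-3 tr H\<close>, \<open>3 tr (A H)\<close>, \<open>tr (A\<^sup>2 H)\<close>; they are independent, as testing on
  \<open>H = 1, A\<^sup>2, A\<close> shows. Smoothness of the product \<open>Hom(\<Gamma>\<^sub>o, SL(3,\<real>))\<close> follows.\<close>

section \<open>Smooth points of products\<close>

lemma polyfun_diff:
  assumes "p \<in> polyfun" "q \<in> polyfun"
  shows "(\<lambda>x. p x - q x) \<in> polyfun"
proof -
  have "(\<lambda>x. p x + (\<lambda>x. -1) x * q x) \<in> polyfun"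
    using assms by (intro polyfun.intros)
  then show ?thesis by simp
qed

lemma polyfun_compose_fst:
  assumes "p \<in> polyfun"
  shows "(\<lambda>x::'a::euclidean_space \<times> 'b::euclidean_space. p (fst x)) \<in> polyfun"
  using assms
proof induction
  case (coord b)
  have "(b, 0) \<in> (Basis :: ('a \<times> 'b) set)"
    using coord by (auto simp: Basis_prod_def)
  then have "(\<lambda>x::'a \<times> 'b. inner x (b, 0)) \<in> polyfun"
    by (rule polyfun.coord)
  then show ?case
    by (simp add: inner_Pair_0)
qed (auto intro: polyfun.intros)

lemma polyfun_compose_snd:
  assumes "p \<in> polyfun"
  shows "(\<lambda>x::'a::euclidean_space \<times> 'b::euclidean_space. p (snd x)) \<in> polyfun"
  using assms
proof induction
  case (coord b)
  have "(0, b) \<in> (Basis :: ('a \<times> 'b) set)"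
    using coord by (auto simp: Basis_prod_def)
  then have "(\<lambda>x::'a \<times> 'b. inner x (0, b)) \<in> polyfun"
    by (rule polyfun.coord)
  then show ?case
    by (simp add: inner_Pair_0)
qed (auto intro: polyfun.intros)

lemma sum_lessThan_add:
  fixes k l :: nat
  shows "(\<Sum>i<k + l. f i) = (\<Sum>i<k. f i) + (\<Sum>j<l. f (k + j))"
proof -
  have "(\<Sum>i<k + l. f i) = (\<Sum>i\<in>{0..<k}. f i) + (\<Sum>i\<in>{k..<k + l}. f i)"
    using sum.atLeastLessThan_concat[of 0 k "k + l" f] by (simp add: atLeast0LessThan)
  also have "(\<Sum>i\<in>{k..<k + l}. f i) = (\<Sum>j<l. f (k + j))"
    using sum.shift_bounds_nat_ivl[of f 0 k l] by (simp add: atLeast0LessThan add.commute)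
  finally show ?thesis
    by (simp add: atLeast0LessThan)
qed

lemma all_less_add_iff:
  fixes k l :: nat
  shows "(\<forall>i<k + l. R i) \<longleftrightarrow> (\<forall>i<k. R i) \<and> (\<forall>j<l. R (k + j))"
  by (auto, metis add_diff_inverse_nat add_less_cancel_left not_less)

lemma has_derivative_zero_at_zero:
  assumes "(f has_derivative f') F"
  shows "f' 0 = 0"
  using has_derivative_bounded_linear[OF assms] by (rule linear_simps)

definition linearly_independent_funs :: "nat \<Rightarrow> (nat \<Rightarrow> 'a \<Rightarrow> real) \<Rightarrow> bool" where
  "linearly_independent_funs k D \<longleftrightarrow>
     (\<forall>c. (\<forall>v. (\<Sum>i<k. c i * D i v) = 0) \<longrightarrow> (\<forall>i<k. c i = 0))"

definition pair_family ::
    "nat \<Rightarrow> (nat \<Rightarrow> 'a \<Rightarrow> 'c) \<Rightarrow> (nat \<Rightarrow> 'b \<Rightarrow> 'c) \<Rightarrow> nat \<Rightarrow> 'a \<times> 'b \<Rightarrow> 'c" where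
  "pair_family k F G i = (if i < k then (\<lambda>z. F i (fst z)) else (\<lambda>z. G (i - k) (snd z)))"

lemma pair_family_fst: "i < k \<Longrightarrow> pair_family k F G i = (\<lambda>z. F i (fst z))"
  by (simp add: pair_family_def)

lemma pair_family_snd: "pair_family k F G (k + j) = (\<lambda>z. G j (snd z))"
  by (simp add: pair_family_def)

lemma linearly_independent_funs_pair_family:
  assumes "linearly_independent_funs k D" "linearly_independent_funs l D'"
    and "\<forall>i<k. D i 0 = 0" "\<forall>j<l. D' j 0 = 0"
  shows "linearly_independent_funs (k + l) (pair_family k D D')"
  unfolding linearly_independent_funs_def
proof (rule allI, rule impI)
  fix c
  assume c: "\<forall>v. (\<Sum>i<k + l. c i * pair_family k D D' i v) = 0"
  have "(\<Sum>i<k. c i * D i u) = 0" for u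
    using c[rule_format, of "(u, 0)"] assms(4)
    by (simp add: sum_lessThan_add pair_family_fst pair_family_snd)
  then have "\<forall>i<k. c i = 0"
    using assms(1) unfolding linearly_independent_funs_def by blast
  have "(\<Sum>j<l. c (k + j) * D' j v) = 0" for v
    using c[rule_format, of "(0, v)"] assms(3)
    by (simp add: sum_lessThan_add pair_family_fst pair_family_snd)
  then have "\<forall>j<l. c (k + j) = 0"
    using assms(2)[unfolded linearly_independent_funs_def, rule_format, of "\<lambda>j. c (k + j)"]
    by blast
  with \<open>\<forall>i<k. c i = 0\<close> show "\<forall>i<k + l. c i = 0"
    unfolding all_less_add_iff by blast
qed

lemma smooth_point_Times:
  fixes x :: "'a::euclidean_space" and y :: "'b::euclidean_space"
  assumes "smooth_point V x" "smooth_point W y"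
  shows "smooth_point (V \<times> W) (x, y)"
proof -
  obtain k P D Q where
    P: "\<forall>i<k. P i \<in> polyfun \<and> (\<forall>z\<in>V. P i z = 0) \<and> (P i has_derivative D i) (at x)" and
    D: "linearly_independent_funs k D" and
    Q: "Q \<in> polyfun" "Q x \<noteq> 0" "\<forall>z. Q z \<noteq> 0 \<longrightarrow> (z \<in> V \<longleftrightarrow> (\<forall>i<k. P i z = 0))" and
    "x \<in> V"
    using assms(1) unfolding smooth_point_def linearly_independent_funs_def by blast
  obtain l P' D' Q' where
    P': "\<forall>j<l. P' j \<in> polyfun \<and> (\<forall>z\<in>W. P' j z = 0) \<and> (P' j has_derivative D' j) (at y)" and
    D': "linearly_independent_funs l D'" and
    Q': "Q' \<in> polyfun" "Q' y \<noteq> 0" "\<forall>z. Q' z \<noteq> 0 \<longrightarrow> (z \<in> W \<longleftrightarrow> (\<forall>j<l. P' j z = 0))" and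
    "y \<in> W"
    using assms(2) unfolding smooth_point_def linearly_independent_funs_def by blast
  define QQ where "QQ z = Q (fst z) * Q' (snd z)" for z :: "'a \<times> 'b"
  let ?P = "pair_family k P P'" and ?D = "pair_family k D D'"
  have "?P i \<in> polyfun \<and> (\<forall>z\<in>V \<times> W. ?P i z = 0) \<and> (?P i has_derivative ?D i) (at (x, y))"
    if "i < k" for i
    using P that has_derivative_compose[OF has_derivative_fst[OF has_derivative_ident],
        where x="(x, y)" and s=UNIV]
    by (auto simp: pair_family_fst intro: polyfun_compose_fst)
  moreover have "?P (k + j) \<in> polyfun \<and> (\<forall>z\<in>V \<times> W. ?P (k + j) z = 0) \<and>
      (?P (k + j) has_derivative ?D (k + j)) (at (x, y))" if "j < l" for j
    using P' that has_derivative_compose[OF has_derivative_snd[OF has_derivative_ident],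
        where x="(x, y)" and s=UNIV]
    by (auto simp: pair_family_snd intro: polyfun_compose_snd)
  ultimately have equations: "\<forall>i<k + l. ?P i \<in> polyfun \<and> (\<forall>z\<in>V \<times> W. ?P i z = 0) \<and>
      (?P i has_derivative ?D i) (at (x, y))"
    unfolding all_less_add_iff by blast
  have "\<forall>i<k. D i 0 = 0" "\<forall>j<l. D' j 0 = 0"
    using P P' has_derivative_zero_at_zero by blast+
  with D D' have "linearly_independent_funs (k + l) ?D"
    by (rule linearly_independent_funs_pair_family)
  moreover have "QQ \<in> polyfun"
    unfolding QQ_def using Q(1) Q'(1)
    by (intro polyfun.mult polyfun_compose_fst polyfun_compose_snd)
  moreover have "\<forall>z. QQ z \<noteq> 0 \<longrightarrow> (z \<in> V \<times> W \<longleftrightarrow> (\<forall>i<k + l. ?P i z = 0))"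
    using Q(3) Q'(3) unfolding QQ_def all_less_add_iff
    by (auto simp: pair_family_fst pair_family_snd mem_Times_iff)
  ultimately show ?thesis
    unfolding smooth_point_def linearly_independent_funs_def[symmetric]
    using \<open>x \<in> V\<close> \<open>y \<in> W\<close> Q(2) Q'(2) equations
    by (intro conjI exI[of _ "k + l"] exI[of _ ?P] exI[of _ ?D] exI[of _ QQ]) (auto simp: QQ_def)
qed

section \<open>Cube roots of the identity in SL(3)\<close>

definition trace3 :: "mat3 \<Rightarrow> real" where
  "trace3 A = A$1$1 + A$2$2 + A$3$3"

text \<open>The characteristic polynomial of \<open>A\<close> is \<open>X\<^sup>3 - trace3 A X\<^sup>2 + sigma2 A X - det A\<close>.\<close>

definition sigma2 :: "mat3 \<Rightarrow> real" where
  "sigma2 A = A$1$1 * A$2$2 - A$1$2 * A$2$1 + A$1$1 * A$3$3 - A$1$3 * A$3$1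
    + A$2$2 * A$3$3 - A$2$3 * A$3$2"

lemma mk3_nth [simp]:
  "mk3 a b c d e f g h i $ 1 $ 1 = a" "mk3 a b c d e f g h i $ 1 $ 2 = b"
  "mk3 a b c d e f g h i $ 1 $ 3 = c" "mk3 a b c d e f g h i $ 2 $ 1 = d"
  "mk3 a b c d e f g h i $ 2 $ 2 = e" "mk3 a b c d e f g h i $ 2 $ 3 = f"
  "mk3 a b c d e f g h i $ 3 $ 1 = g" "mk3 a b c d e f g h i $ 3 $ 2 = h"
  "mk3 a b c d e f g h i $ 3 $ 3 = i"
  by (simp_all add: mk3_def vector_3)

lemma matrix_mult_nth_3: "((A::mat3) ** B) $ i $ j = A$i$1 * B$1$j + A$i$2 * B$2$j + A$i$3 * B$3$j"
  by (simp add: matrix_matrix_mult_def sum_3)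

lemma mat3_eq_iff: "(A::mat3) = B \<longleftrightarrow> (\<forall>i j. A$i$j = B$i$j)"
  by (simp add: vec_eq_iff)

lemma cayley_hamilton3:
  "(A::mat3) ** A ** A = trace3 A *\<^sub>R (A ** A) - sigma2 A *\<^sub>R A + det A *\<^sub>R mat 1"
  by (simp add: mat3_eq_iff forall_3 matrix_mult_nth_3 trace3_def sigma2_def det_3 mat_def
      algebra_simps)

lemma trace3_square: "trace3 ((A::mat3) ** A) = trace3 A ^ 2 - 2 * sigma2 A"
  by (simp add: trace3_def sigma2_def matrix_mult_nth_3 algebra_simps power2_eq_square)

lemma trace3_mult_commute: "trace3 ((A::mat3) ** B) = trace3 (B ** A)"
  by (simp add: trace3_def matrix_mult_nth_3 algebra_simps)

lemma trace3_scaleR: "trace3 (c *\<^sub>R A) = c * trace3 A"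
  by (simp add: trace3_def algebra_simps)

lemma sigma2_scaleR: "sigma2 (c *\<^sub>R A) = c^2 * sigma2 A"
  by (simp add: sigma2_def algebra_simps power2_eq_square)

lemma det3_scaleR: "det (c *\<^sub>R (A::mat3)) = c^3 * det A"
  by (simp add: det_3 algebra_simps power3_eq_cube)

lemma trace3_transpose: "trace3 (transpose A) = trace3 A"
  by (simp add: trace3_def transpose_def)

lemma sigma2_transpose: "sigma2 (transpose A) = sigma2 A"
  by (simp add: sigma2_def transpose_def algebra_simps)

lemma trace3_mat: "trace3 (mat c) = 3 * c"
  by (simp add: trace3_def mat_def)

text \<open>Cayley--Hamilton turns \<open>A\<^sup>3 = 1\<close> into \<open>t A\<^sup>2 = s A\<close>, hence \<open>t = s A\<^sup>2\<close> and
  \<open>t A = s\<close>; taking traces gives \<open>t\<^sup>2 = 3s\<close> and \<open>s\<^sup>2 = 3t\<close>, so \<open>t\<^sup>4 = 27t\<close> and \<open>t \<in> {0, 3}\<close>.\<close>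

lemma SL3_cube_root_iff:
  fixes A :: mat3
  assumes "trace3 A \<noteq> 3"
  shows "det A = 1 \<and> A ** A ** A = mat 1 \<longleftrightarrow> trace3 A = 0 \<and> sigma2 A = 0 \<and> det A = 1"
proof
  assume A: "det A = 1 \<and> A ** A ** A = mat 1"
  let ?t = "trace3 A" and ?s = "sigma2 A"
  have "?t *\<^sub>R (A ** A) = ?s *\<^sub>R A"
    using cayley_hamilton3[of A] A by (simp add: algebra_simps)
  then have "(?t *\<^sub>R (A ** A)) ** A = (?s *\<^sub>R A) ** A"
    by simp
  then have square: "?t *\<^sub>R mat 1 = ?s *\<^sub>R (A ** A)"
    using A by (simp add: scalar_matrix_assoc[symmetric])
  then have "(?t *\<^sub>R mat 1) ** A = (?s *\<^sub>R (A ** A)) ** A"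
    by simp
  then have linear: "?t *\<^sub>R A = ?s *\<^sub>R mat 1"
    using A by (simp add: scalar_matrix_assoc[symmetric])
  have t2: "?t * ?t = 3 * ?s"
    using arg_cong[OF linear, of trace3] by (simp add: trace3_scaleR trace3_mat)
  have "3 * ?t = ?s * (?t^2 - 2 * ?s)"
    using arg_cong[OF square, of trace3] by (simp add: trace3_scaleR trace3_mat trace3_square)
  with t2 have "?s * ?s = 3 * ?t"
    by (simp add: power2_eq_square algebra_simps)
  with t2 have "?t * (?t - 3) * ((?t + 3/2)^2 + 27/4) = 0"
    by (simp add: algebra_simps power2_eq_square)
  moreover have "(?t + 3/2)^2 + 27/4 > 0"
    by (simp add: add_nonneg_pos)
  ultimately have "?t = 0"
    using assms by auto
  with t2 A show "?t = 0 \<and> ?s = 0 \<and> det A = 1"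
    by simp
next
  assume "trace3 A = 0 \<and> sigma2 A = 0 \<and> det A = 1"
  then show "det A = 1 \<and> A ** A ** A = mat 1"
    using cayley_hamilton3[of A] by simp
qed

lemma polyfun_mat_nth: "(\<lambda>A::real^'n^'m. A $ i $ j) \<in> polyfun"
proof -
  have "axis i (axis j 1) \<in> (Basis :: (real^'n^'m) set)"
    by (auto simp: Basis_vec_def)
  then have "(\<lambda>A::real^'n^'m. inner A (axis i (axis j 1))) \<in> polyfun"
    by (rule polyfun.coord)
  then show ?thesis
    by (simp add: inner_axis)
qed

lemmas polyfun_mat_intros = polyfun.const polyfun.add polyfun.mult polyfun_diff polyfun_mat_nth

lemma has_derivative_mat_nth: "((\<lambda>A::real^'n^'m. A $ i $ j) has_derivative (\<lambda>H. H $ i $ j)) F"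
  by (intro bounded_linear.has_derivative[OF bounded_linear_vec_nth] has_derivative_ident)

lemmas has_derivative_mat_intros = has_derivative_add has_derivative_diff has_derivative_mult
  has_derivative_const has_derivative_mat_nth

lemma has_derivative_trace3: "(trace3 has_derivative trace3) F"
  unfolding trace3_def[abs_def]
  by (intro has_derivative_mat_intros)

lemma has_derivative_sigma2:
  "(sigma2 has_derivative (\<lambda>H. trace3 A * trace3 H - trace3 (A ** H))) (at A)"
  unfolding sigma2_def[abs_def]
  by (rule has_derivative_eq_rhs, (rule has_derivative_mat_intros)+)
    (simp add: fun_eq_iff trace3_def matrix_mult_nth_3 algebra_simps)

text \<open>The derivative of \<open>det\<close> at \<open>A\<close> is \<open>H \<mapsto> trace (adj A ** H)\<close>, with the adjugate
  \<open>adj A = A\<^sup>2 - trace3 A *\<^sub>R A + sigma2 A *\<^sub>R 1\<close> read off from Cayley--Hamilton.\<close>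

lemma has_derivative_det3:
  "(det has_derivative
     (\<lambda>H. trace3 (A ** A ** H) - trace3 A * trace3 (A ** H) + sigma2 A * trace3 H)) (at (A::mat3))"
  unfolding det_3[abs_def]
  by (rule has_derivative_eq_rhs, (rule has_derivative_mat_intros)+)
    (simp add: fun_eq_iff trace3_def sigma2_def matrix_mult_nth_3 algebra_simps)

definition SL3_cube_roots :: "mat3 set" where
  "SL3_cube_roots = {A. det A = 1 \<and> A ** A ** A = mat 1}"

text \<open>The factor \<open>trace3 A - 3\<close> makes the equations vanish on all of \<open>SL3_cube_roots\<close>,
  including the points of trace \<open>3\<close>.\<close>

definition SL3_cube_root_eqs :: "nat \<Rightarrow> mat3 \<Rightarrow> real" where
  "SL3_cube_root_eqs i A =
     [trace3 A * (trace3 A - 3), sigma2 A * (trace3 A - 3), det A - 1] ! i"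

lemma all_less_3_iff: "(\<forall>i<3::nat. R i) \<longleftrightarrow> R 0 \<and> R 1 \<and> R 2"
proof -
  have "{..<3::nat} = {0, 1, 2}"
    by auto
  then show ?thesis
    by (auto simp: lessThan_iff[symmetric])
qed

lemma SL3_cube_root_eqs_polyfun: "i < 3 \<Longrightarrow> SL3_cube_root_eqs i \<in> polyfun"
  using all_less_3_iff[of "\<lambda>i. SL3_cube_root_eqs i \<in> polyfun"]
  unfolding SL3_cube_root_eqs_def trace3_def sigma2_def det_3
  by (simp add: polyfun_mat_intros)

lemma SL3_cube_root_eqs_vanish:
  assumes "A \<in> SL3_cube_roots" "i < 3"
  shows "SL3_cube_root_eqs i A = 0"
proof (cases "trace3 A = 3")
  case True
  then show ?thesis
    using assms all_less_3_iff[of "\<lambda>i. SL3_cube_root_eqs i A = 0"]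
    by (auto simp: SL3_cube_roots_def SL3_cube_root_eqs_def)
next
  case False
  then show ?thesis
    using assms SL3_cube_root_iff all_less_3_iff[of "\<lambda>i. SL3_cube_root_eqs i A = 0"]
    by (auto simp: SL3_cube_roots_def SL3_cube_root_eqs_def)
qed

lemma SL3_cube_roots_iff_eqs:
  assumes "trace3 A \<noteq> 3"
  shows "A \<in> SL3_cube_roots \<longleftrightarrow> (\<forall>i<3. SL3_cube_root_eqs i A = 0)"
  using SL3_cube_root_iff[OF assms] assms
  by (auto simp: all_less_3_iff SL3_cube_roots_def SL3_cube_root_eqs_def)

lemma smooth_point_SL3_cube_roots:
  assumes A: "A \<in> SL3_cube_roots" and "trace3 A \<noteq> 3"
  shows "smooth_point SL3_cube_roots A"
proof -
  have "trace3 A = 0" "sigma2 A = 0" and cube: "A ** A ** A = mat 1"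
    using A SL3_cube_root_iff[OF assms(2)] by (auto simp: SL3_cube_roots_def)
  then have traces: "trace3 A = 0" "trace3 (A ** A) = 0" "trace3 (A ** A ** A) = 3"
    "trace3 (A ** A ** (A ** A)) = 0"
    by (simp_all add: trace3_square trace3_mat matrix_mul_assoc[symmetric])
  define D where "D i = [\<lambda>H. -3 * trace3 H, \<lambda>H. 3 * trace3 (A ** H),
    \<lambda>H. trace3 (A ** A ** H)] ! i" for i
  have "((\<lambda>B. trace3 B * (trace3 B - 3)) has_derivative D 0) (at A)"
    unfolding D_def
    by (rule has_derivative_eq_rhs, (rule has_derivative_mult has_derivative_diff
        has_derivative_trace3 has_derivative_const)+) (simp add: fun_eq_iff traces)
  moreover have "((\<lambda>B. sigma2 B * (trace3 B - 3)) has_derivative D 1) (at A)"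
    unfolding D_def
    by (rule has_derivative_eq_rhs, (rule has_derivative_mult has_derivative_diff
        has_derivative_trace3 has_derivative_sigma2 has_derivative_const)+)
      (simp add: fun_eq_iff traces \<open>sigma2 A = 0\<close>)
  moreover have "((\<lambda>B. det B - 1) has_derivative D 2) (at A)"
    unfolding D_def
    by (rule has_derivative_eq_rhs, (rule has_derivative_diff
        has_derivative_det3 has_derivative_const)+)
      (simp add: fun_eq_iff traces \<open>sigma2 A = 0\<close>)
  ultimately have derivative: "\<forall>i<3. (SL3_cube_root_eqs i has_derivative D i) (at A)"
    unfolding all_less_3_iff SL3_cube_root_eqs_def by simp
  have independent: "\<forall>i<3. c i = 0" if c: "\<forall>H. (\<Sum>i<3. c i * D i H) = 0" for c
  proof -
    have "c 0 = 0" "c 1 = 0" "c 2 = 0"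
      using c[rule_format, of "mat 1"] c[rule_format, of "A ** A"] c[rule_format, of A]
      by (simp_all add: eval_nat_numeral D_def traces trace3_mat matrix_mul_assoc)
    then show ?thesis
      by (simp add: all_less_3_iff)
  qed
  have "(\<lambda>B. trace3 B - 3) \<in> polyfun"
    unfolding trace3_def by (intro polyfun_mat_intros)
  then show ?thesis
    unfolding smooth_point_def
    using A assms(2) derivative independent SL3_cube_root_eqs_polyfun SL3_cube_root_eqs_vanish
      SL3_cube_roots_iff_eqs
    by (intro conjI exI[of _ 3] exI[of _ SL3_cube_root_eqs] exI[of _ D]
        exI[of _ "\<lambda>B. trace3 B - 3"]) auto
qed

section \<open>Matrices with characteristic polynomial \<open>X\<^sup>3 - d\<close>\<close>

definition pure_cubic :: "mat3 \<Rightarrow> bool" where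
  "pure_cubic M \<longleftrightarrow> trace3 M = 0 \<and> sigma2 M = 0 \<and> det M \<noteq> 0"

lemma pure_cubic_cube: "pure_cubic M \<Longrightarrow> M ** M ** M = det M *\<^sub>R mat 1"
  using cayley_hamilton3[of M] by (simp add: pure_cubic_def)

lemma pure_cubic_scaleR: "pure_cubic M \<Longrightarrow> c \<noteq> 0 \<Longrightarrow> pure_cubic (c *\<^sub>R M)"
  by (simp add: pure_cubic_def trace3_scaleR sigma2_scaleR det3_scaleR)

lemma pure_cubic_transpose: "pure_cubic M \<Longrightarrow> pure_cubic (transpose M)"
  by (simp add: pure_cubic_def trace3_transpose sigma2_transpose det_transpose)

lemma pure_cubic_square:
  assumes "pure_cubic M"
  shows "pure_cubic (M ** M)"
proof -
  have "M ** M ** (M ** M) = det M *\<^sub>R M"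
    using pure_cubic_cube[OF assms]
    by (metis matrix_mul_assoc matrix_mul_lid matrix_scalar_ac scalar_matrix_assoc)
  then have "trace3 ((M ** M) ** (M ** M)) = 0"
    using assms by (simp add: trace3_scaleR pure_cubic_def)
  moreover have "trace3 (M ** M) = 0"
    using assms by (simp add: trace3_square pure_cubic_def)
  ultimately show ?thesis
    using assms trace3_square[of "M ** M"] by (simp add: pure_cubic_def det_mul)
qed

lemma invertible_matrix_inv:
  "invertible A \<Longrightarrow> A ** matrix_inv A = mat 1 \<and> matrix_inv A ** A = mat 1"
  unfolding invertible_def matrix_inv_def by (rule someI_ex)

lemma matrix_inv_eqI:
  fixes A B :: "real^'n^'n"
  assumes "A ** B = mat 1"
  shows "matrix_inv A = B"
proof -
  have "invertible A"
    using assms matrix_left_right_inverse unfolding invertible_def by blast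
  have "matrix_inv A = matrix_inv A ** (A ** B)"
    by (simp add: assms)
  also have "\<dots> = (matrix_inv A ** A) ** B"
    by (simp add: matrix_mul_assoc)
  also have "\<dots> = B"
    by (simp add: invertible_matrix_inv \<open>invertible A\<close>)
  finally show ?thesis .
qed

lemma pure_cubic_matrix_inv:
  assumes "pure_cubic M"
  shows "pure_cubic (matrix_inv M)"
proof -
  have "M ** ((1 / det M) *\<^sub>R (M ** M)) = (1 / det M) *\<^sub>R (M ** M ** M)"
    by (simp add: matrix_scalar_ac matrix_mul_assoc scalar_matrix_assoc)
  also have "\<dots> = mat 1"
    using assms by (simp add: pure_cubic_cube pure_cubic_def)
  finally have "M ** ((1 / det M) *\<^sub>R (M ** M)) = mat 1" .
  then have "matrix_inv M = (1 / det M) *\<^sub>R (M ** M)"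
    by (rule matrix_inv_eqI)
  moreover have "1 / det M \<noteq> 0"
    using assms by (simp add: pure_cubic_def)
  ultimately show ?thesis
    by (simp add: pure_cubic_scaleR pure_cubic_square assms)
qed

lemma pure_cubic_similar:
  assumes XP: "X ** P = mat 1" and M: "pure_cubic M"
  shows "pure_cubic (X ** M ** P)"
proof -
  have PX: "P ** X = mat 1"
    using XP matrix_left_right_inverse by blast
  have trace_similar: "trace3 (X ** N ** P) = trace3 N" for N
    using trace3_mult_commute[of "X ** N" P] by (simp add: matrix_mul_assoc PX)
  have "(X ** M ** P) ** (X ** M ** P) = X ** (M ** M) ** P"
    by (simp add: matrix_mul_assoc) (simp add: matrix_mul_assoc[symmetric] PX)
  then have trace_square: "trace3 ((X ** M ** P) ** (X ** M ** P)) = trace3 (M ** M)"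
    by (simp add: trace_similar)
  have "det X * det P = 1"
    using XP det_mul[of X P] by (simp add: det_I)
  then have "det X \<noteq> 0" "det P \<noteq> 0"
    by auto
  with M trace_square show ?thesis
    using trace_similar[of M] trace3_square[of M] trace3_square[of "X ** M ** P"]
    by (simp add: pure_cubic_def det_mul)
qed

lemma pure_cubic_A_Theta:
  assumes "zt \<in> {-1<..<1}" "zb \<in> {-1<..<1}"
  shows "pure_cubic (A_Theta zt zb)"
proof -
  have "det (A_Theta zt zb) = - ((1 - zt^2)^2 * (1 - zb^2))"
    by (simp add: A_Theta_def det_3 algebra_simps power2_eq_square)
  moreover have "1 - zt^2 > 0" "1 - zb^2 > 0"
    using assms by (auto simp: abs_square_less_1)
  moreover have "trace3 (A_Theta zt zb) = 0" "sigma2 (A_Theta zt zb) = 0"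
    by (simp_all add: A_Theta_def trace3_def sigma2_def algebra_simps power2_eq_square)
  ultimately show ?thesis
    by (simp add: pure_cubic_def)
qed

lemma invertible_D_Theta:
  assumes "zt \<in> {-1<..<1}" "zb \<in> {-1<..<1}"
  shows "invertible (D_Theta zt zb)"
proof -
  have "det (D_Theta zt zb) = (1 - zt^2) * (1 - zb^2)"
    by (simp add: D_Theta_def det_3 algebra_simps power2_eq_square)
  moreover have "1 - zt^2 > 0" "1 - zb^2 > 0"
    using assms by (auto simp: abs_square_less_1)
  ultimately show ?thesis
    by (simp add: invertible_det_nz)
qed

lemma det_Sigma: "det (Sigma eps del) = 1"
proof -
  have "det (Sigma eps del) = exp (-del) * exp del * cosh eps ^ 2 - sinh eps ^ 2"
    by (simp add: Sigma_def det_3 algebra_simps power2_eq_square)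
  then show ?thesis
    by (simp add: exp_minus hyperbolic_pythagoras)
qed

lemma pure_cubic_B_Theta:
  assumes "zt \<in> {-1<..<1}" "zb \<in> {-1<..<1}"
  shows "pure_cubic (B_Theta eps del zt zb)"
proof -
  let ?S = "Sigma eps del" and ?D = "D_Theta zt zb"
  have S: "matrix_inv ?S ** ?S = mat 1"
    using invertible_matrix_inv[of ?S] det_Sigma by (simp add: invertible_det_nz)
  have D: "matrix_inv ?D ** ?D = mat 1"
    using invertible_matrix_inv invertible_D_Theta[OF assms] by blast
  have "(matrix_inv ?S ** matrix_inv ?D) ** (?D ** ?S) = mat 1"
    by (simp add: matrix_mul_assoc) (simp add: matrix_mul_assoc[symmetric] D S)
  moreover have "B_Theta eps del zt zb =
      (matrix_inv ?S ** matrix_inv ?D) ** matrix_inv (transpose (A_Theta zt zb)) ** (?D ** ?S)"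
    unfolding B_Theta_def by (simp add: matrix_mul_assoc)
  ultimately show ?thesis
    using pure_cubic_similar pure_cubic_matrix_inv pure_cubic_transpose pure_cubic_A_Theta[OF assms]
    by metis
qed

lemma piSL_pure_cubic:
  assumes "pure_cubic M"
  shows "piSL M \<in> SL3_cube_roots" "trace3 (piSL M) = 0"
proof -
  have "root 3 (det M) ^ 3 = det M"
    by (simp add: odd_real_root_pow)
  moreover have "det M \<noteq> 0"
    using assms by (simp add: pure_cubic_def)
  ultimately have "pure_cubic (piSL M)" "det (piSL M) = 1"
    using assms by (auto simp: piSL_def pure_cubic_scaleR det3_scaleR power_divide)
  then show "piSL M \<in> SL3_cube_roots" "trace3 (piSL M) = 0"
    by (simp_all add: SL3_cube_roots_def pure_cubic_cube pure_cubic_def)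
qed

lemma HomGamma_eq_Times: "HomGamma = SL3_cube_roots \<times> SL3_cube_roots"
  by (auto simp: HomGamma_def SL3_cube_roots_def)

theorem lemma11p2:
  fixes eps del zt zb :: real
  assumes "(eps, del) \<in> regionR"
    and "zt \<in> {-1<..<1}" and "zb \<in> {-1<..<1}"
  shows "smooth_point HomGamma (piSL (A_Theta zt zb), piSL (B_Theta eps del zt zb))"
proof -
  have "pure_cubic (A_Theta zt zb)" "pure_cubic (B_Theta eps del zt zb)"
    using assms(2,3) by (rule pure_cubic_A_Theta, rule pure_cubic_B_Theta)
  then show ?thesis
    unfolding HomGamma_eq_Times
    by (intro smooth_point_Times smooth_point_SL3_cube_roots) (simp_all add: piSL_pure_cubic)
qed

end
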